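(* Let $0<\delta\le\rho\le r\le1$ and let $L,\tilde L\subset\mathcal{L}_{SL_2}$ be finite. (i) Suppose $\tilde L$ is $\rho$-separated and contained in a ball of radius $r$. Then there is $\tilde L'\subset\tilde L$ with $\#\tilde L'\gtrsim(\rho/r)\#\tilde L$ such that $\#(\tilde L'\cap B)\le(s/\rho)^2$ for every $s\in[\rho,1]$ and every ball $B\subset\mathbb{R}^4$ of radius $s$. (ii) Suppose $\#(L\cap B)\le(s/\delta)^2$ for every $s\in[\delta,1]$ and every ball $B\subset\mathbb{R}^4$ of radius $s$, and $L\subset\bigcup_{\tilde\ell\in\tilde L}B(\tilde\ell,\rho)$. Then for every $\varepsilon>0$ there exist $c=c(\varepsilon)>0$ and $\tilde L'\subset\tilde L$ with $\#\tilde L'\gtrsim c\,\delta^{\varepsilon}(\delta/\rho)^2\#L$ such that $\#(\tilde L'\cap B)\le(s/\rho)^2$ for every $s\in[\rho,1]$ and every ball $B\subset\mathbb{R}^4$ of radius $s$.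
   Context: For $(a,b,c,d)\in\mathbb{R}^4$ with $ad-bc=1$, $\ell_{(a,b,c,d)}=\{(a,b,0)+s(c,d,1):s\in\mathbb{R}\}$; $\mathcal{L}_{SL_2}$ is the set of such lines, each identified with its parameter in $\mathbb{R}^4$; separation, balls and distances are taken in parameter space with the Euclidean metric. A number $R\ge1$ is fixed and only lines with parameter in $B(0,R)\subset\mathbb{R}^4$ are considered; $X\lesssim Y$ means $X\le CY$ with $C$ depending only on $R$. *)

theory Defs
  imports "HOL-Analysis.Analysis"
begin

text \<open>A line ell_(a,b,c,d) is identified with its parameter (a,b,c,d) in R^4;
  the parameters of lines in L_SL2 are those with ad - bc = 1.\<close>
definition SL2_lines :: "(real^4) set" where
  "SL2_lines = {p. p$1 * p$4 - p$2 * p$3 = 1}"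

definition SL2_lines_R :: "real \<Rightarrow> (real^4) set" where
  "SL2_lines_R R = SL2_lines \<inter> ball 0 R"

definition separated :: "real \<Rightarrow> (real^4) set \<Rightarrow> bool" where
  "separated \<rho> A \<longleftrightarrow> (\<forall>x\<in>A. \<forall>y\<in>A. x \<noteq> y \<longrightarrow> dist x y \<ge> \<rho>)"

definition two_dim_cond :: "real \<Rightarrow> (real^4) set \<Rightarrow> bool" where
  "two_dim_cond t A \<longleftrightarrow>
     (\<forall>s\<in>{t..1}. \<forall>x::real^4. real (card (A \<inter> ball x s)) \<le> (s / t)^2)"

end

theory Submission
  imports Defs
begin

text \<open>The SL2 lines form the three-dimensional hypersurface ad - bc = 1 of R^4: near any of its
  points some coordinate has size at least 1/2, and then the coordinate paired with it in the
  determinant is a Lipschitz function of the other three. Counting grid cells in these three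
  coordinates shows that a \<rho>-separated family meets a ball of radius t \<ge> \<rho> in O((t/\<rho>)^3) lines.

  For (i), take a maximal subset L' of the given family satisfying the two-dimensional condition.
  By maximality every line lies in a ball B of radius s \<in> [\<rho>, 1] with #(L' \<inter> B) \<ge> (s/\<rho>)^2/2.
  The Vitali covering lemma selects disjoint such balls B_i whose dilates 5 B_i cover the family.
  The packing bound, applied to the smaller of 5 B_i and the ball of radius r containing the
  family, gives #(L \<inter> 5 B_i) = O(min(s_i, r)^3 / \<rho>^3), and min(s_i, r)^3 \<le> r s_i^2 makes this
  O((r/\<rho>) #(L' \<inter> B_i)). Summing over the disjoint B_i yields #L = O((r/\<rho>) #L').

  For (ii), take such a maximal subset of L~. As L lies within \<rho> of L~, the doubled balls 2B
  cover L, and the two-dimensional condition on L (extended to radii above 1 by covering B(0,R)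
  with finitely many unit balls) gives #(L \<inter> 10 B) = O((s/\<delta>)^2) = O((\<rho>/\<delta>)^2 #(L' \<inter> 2B)).\<close>

lemma card_floor_interval_le:
  fixes a b :: real
  assumes "a \<le> b"
  shows "real (card {\<lfloor>a\<rfloor>..\<lfloor>b\<rfloor>}) \<le> b - a + 2"
proof -
  have "\<lfloor>a\<rfloor> \<le> \<lfloor>b\<rfloor>" using assms by (rule floor_mono)
  then have "real (card {\<lfloor>a\<rfloor>..\<lfloor>b\<rfloor>}) = of_int \<lfloor>b\<rfloor> - of_int \<lfloor>a\<rfloor> + 1" by simp
  moreover have "of_int \<lfloor>b\<rfloor> \<le> b" "a - 1 < of_int \<lfloor>a\<rfloor>" by linarith+
  ultimately show ?thesis by linarith
qed

lemma floor_divide_eq_imp_abs_diff_less: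
  fixes u v h :: real
  assumes "0 < h" "\<lfloor>u / h\<rfloor> = \<lfloor>v / h\<rfloor>"
  shows "\<bar>u - v\<bar> < h"
proof -
  have "of_int \<lfloor>u / h\<rfloor> \<le> u / h" "u / h < of_int \<lfloor>u / h\<rfloor> + 1"
    "of_int \<lfloor>v / h\<rfloor> \<le> v / h" "v / h < of_int \<lfloor>v / h\<rfloor> + 1" by linarith+
  then have "\<bar>u / h - v / h\<bar> < 1" unfolding assms(2) by linarith
  also have "\<bar>u / h - v / h\<bar> = \<bar>u - v\<bar> / h"
    using assms(1) by (simp add: diff_divide_distrib[symmetric])
  finally show ?thesis using assms(1) by simp
qed

lemma card_le_coordinate_grid:
  fixes A :: "(real^'n) set" and J :: "'n set"
  assumes "0 < h" "0 \<le> t" "A \<subseteq> ball x t"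
    and apart: "\<And>p q. p \<in> A \<Longrightarrow> q \<in> A \<Longrightarrow> (\<And>j. j \<in> J \<Longrightarrow> \<bar>p$j - q$j\<bar> < h) \<Longrightarrow> p = q"
  shows "finite A" "real (card A) \<le> (2 * t / h + 2) ^ card J"
proof -
  define cell where "cell p = restrict (\<lambda>j. \<lfloor>p$j / h\<rfloor>) J" for p :: "real^'n"
  define I where "I j = {\<lfloor>(x$j - t) / h\<rfloor>..\<lfloor>(x$j + t) / h\<rfloor>}" for j
  have "inj_on cell A"
  proof (rule inj_onI)
    fix p q assume "p \<in> A" "q \<in> A" "cell p = cell q"
    moreover have "\<bar>p$j - q$j\<bar> < h" if "j \<in> J" for j
    proof (rule floor_divide_eq_imp_abs_diff_less[OF \<open>0 < h\<close>])
      show "\<lfloor>p$j / h\<rfloor> = \<lfloor>q$j / h\<rfloor>"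
        using fun_cong[OF \<open>cell p = cell q\<close>, of j] that by (simp add: cell_def)
    qed
    ultimately show "p = q" using apart by blast
  qed
  moreover have cells: "cell ` A \<subseteq> (\<Pi>\<^sub>E j\<in>J. I j)"
  proof
    fix c assume "c \<in> cell ` A"
    then obtain p where "p \<in> A" "c = cell p" by blast
    have "\<lfloor>p$j / h\<rfloor> \<in> I j" for j
    proof -
      have "dist (x$j) (p$j) < t"
        using \<open>p \<in> A\<close> \<open>A \<subseteq> ball x t\<close> dist_vec_nth_le[of x j p] by auto
      then have "x$j - t \<le> p$j" "p$j \<le> x$j + t" by (auto simp: dist_real_def)
      then show ?thesis
        unfolding I_def using \<open>0 < h\<close> by (auto intro!: floor_mono divide_right_mono)
    qed
    then show "c \<in> (\<Pi>\<^sub>E j\<in>J. I j)" using \<open>c = cell p\<close> by (simp add: cell_def)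
  qed
  moreover have fin: "finite (\<Pi>\<^sub>E j\<in>J. I j)" by (simp add: I_def finite_PiE)
  ultimately show "finite A" using finite_subset finite_imageD by blast
  have "card A = card (cell ` A)" using \<open>inj_on cell A\<close> by (simp add: card_image)
  also have "\<dots> \<le> (\<Prod>j\<in>J. card (I j))" using card_mono[OF fin cells] by (simp add: card_PiE)
  finally have "real (card A) \<le> (\<Prod>j\<in>J. real (card (I j)))" by (simp only: of_nat_prod[symmetric] of_nat_le_iff)
  also have "\<dots> \<le> (2 * t / h + 2) ^ card J"
  proof (rule prod_le_power)
    fix j
    have "real (card (I j)) \<le> (x$j + t) / h - (x$j - t) / h + 2"
      unfolding I_def using assms(1,2) by (intro card_floor_interval_le divide_right_mono) auto
    moreover have "(x$j + t) / h - (x$j - t) / h = 2 * t / h"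
      using assms(1) by (simp add: field_simps)
    ultimately show "0 \<le> real (card (I j)) \<and> real (card (I j)) \<le> 2 * t / h + 2"
      by simp
  qed (use assms(1,2) in auto)
  finally show "real (card A) \<le> (2 * t / h + 2) ^ card J" .
qed

lemma dist_vec_le_CARD_mult:
  fixes p q :: "real^'n" and e :: real
  assumes "\<And>j. \<bar>p$j - q$j\<bar> \<le> e"
  shows "dist p q \<le> CARD('n) * e"
proof -
  have "dist p q \<le> (\<Sum>j\<in>UNIV. \<bar>(p - q)$j\<bar>)" unfolding dist_norm by (rule norm_le_l1_cart)
  also have "\<dots> \<le> CARD('n) * e" using sum_bounded_above[of UNIV "\<lambda>j. \<bar>(p - q)$j\<bar>" e] assms by simp
  finally show ?thesis .
qed

lemma min_cube_le:
  fixes u v :: real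
  assumes "0 \<le> u" "0 \<le> v"
  shows "min u v ^ 3 \<le> v * u^2"
proof -
  have "min u v ^ 3 = min u v * (min u v)^2" by (simp add: power3_eq_cube power2_eq_square)
  also have "\<dots> \<le> v * u^2" using assms by (intro mult_mono power_mono) auto
  finally show ?thesis .
qed

lemma bounded_finite_unit_ball_cover:
  fixes S :: "'a::heine_borel set"
  assumes "bounded S"
  obtains F where "finite F" "S \<subseteq> (\<Union>y\<in>F. ball y 1)"
proof -
  obtain x r where S: "S \<subseteq> cball x r" using assms unfolding bounded_subset_cball by blast
  obtain F where "finite F" and cover: "cball x r \<subseteq> (\<Union>y\<in>F. ball y 1)"
    using compact_cball[of x r, unfolded compact_eq_totally_bounded, THEN conjunct2, rule_format, OF zero_less_one]
    by blast
  show thesis using \<open>finite F\<close> subset_trans[OF S cover] by (rule that)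
qed

lemma powr_mult_le:
  fixes \<delta> \<epsilon> y z :: real
  assumes "y \<le> z" "0 \<le> y" "0 < \<delta>" "\<delta> \<le> 1" "0 < \<epsilon>"
  shows "\<delta> powr \<epsilon> * y \<le> z"
proof -
  have "\<delta> powr \<epsilon> \<le> 1" using assms(3-5) by (intro powr_le1) auto
  then have "\<delta> powr \<epsilon> * y \<le> y" using assms(2) by (simp add: mult_left_le_one_le)
  then show ?thesis using assms(1) by linarith
qed

lemma SL2_lines_R_coordinates:
  assumes "p \<in> SL2_lines_R R"
  shows "p$1 * p$4 - p$2 * p$3 = 1" "\<bar>p$j\<bar> \<le> R"
proof -
  show "p$1 * p$4 - p$2 * p$3 = 1" using assms by (simp add: SL2_lines_R_def SL2_lines_def)
  have "\<bar>p$j\<bar> \<le> norm p" by (rule component_le_norm_cart)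
  also have "\<dots> < R" using assms by (simp add: SL2_lines_R_def)
  finally show "\<bar>p$j\<bar> \<le> R" by simp
qed

lemma SL2_lines_large_coordinate:
  assumes "p \<in> SL2_lines"
  obtains k where "1/2 \<le> \<bar>p$k\<bar>"
proof (rule ccontr)
  assume "\<not> thesis"
  then have small: "\<bar>p$k\<bar> < 1/2" for k using that by (meson not_le)
  have "\<bar>p$1\<bar> * \<bar>p$4\<bar> \<le> 1/2 * (1/2)" using small[of 1] small[of 4] by (intro mult_mono) auto
  moreover have "\<bar>p$2\<bar> * \<bar>p$3\<bar> \<le> 1/2 * (1/2)" using small[of 2] small[of 3] by (intro mult_mono) auto
  moreover have "1 \<le> \<bar>p$1\<bar> * \<bar>p$4\<bar> + \<bar>p$2\<bar> * \<bar>p$3\<bar>"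
  proof -
    have "1 = p$1 * p$4 - p$2 * p$3" using assms by (simp add: SL2_lines_def)
    also have "\<dots> \<le> \<bar>p$1 * p$4\<bar> + \<bar>p$2 * p$3\<bar>" by linarith
    finally show ?thesis by (simp add: abs_mult)
  qed
  ultimately show False by linarith
qed

lemma det_eq_coordinate_close:
  fixes a b c d a' b' c' d' R h :: real
  assumes "a * d - b * c = a' * d' - b' * c'" "1/2 \<le> \<bar>d\<bar>" "\<bar>b\<bar> \<le> R" "\<bar>c'\<bar> \<le> R" "\<bar>a'\<bar> \<le> R"
    "\<bar>b - b'\<bar> < h" "\<bar>c - c'\<bar> < h" "\<bar>d - d'\<bar> < h"
  shows "\<bar>a - a'\<bar> \<le> 6 * R * h"
proof -
  have "(a - a') * d = b * (c - c') + c' * (b - b') - a' * (d - d')"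
    using assms(1) by (simp add: algebra_simps)
  moreover have "\<bar>b * (c - c')\<bar> \<le> R * h" "\<bar>c' * (b - b')\<bar> \<le> R * h" "\<bar>a' * (d - d')\<bar> \<le> R * h"
    unfolding abs_mult using assms(3-8) by (auto intro!: mult_mono)
  ultimately have "\<bar>a - a'\<bar> * \<bar>d\<bar> \<le> 3 * (R * h)" unfolding abs_mult[symmetric] by linarith
  moreover have "\<bar>a - a'\<bar> * (1/2) \<le> \<bar>a - a'\<bar> * \<bar>d\<bar>" using assms(2) by (intro mult_left_mono) auto
  ultimately have "\<bar>a - a'\<bar> * (1/2) \<le> 3 * (R * h)" by linarith
  then show ?thesis by (simp add: mult.assoc)
qed

definition det_partner :: "4 \<Rightarrow> 4" where
  "det_partner k = (if k = 1 then 4 else if k = 4 then 1 else if k = 2 then 3 else 2)"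

lemma SL2_lines_R_chart:
  assumes "p \<in> SL2_lines_R R" "q \<in> SL2_lines_R R" "1/2 \<le> \<bar>p$k\<bar>"
    "\<And>j. j \<noteq> det_partner k \<Longrightarrow> \<bar>p$j - q$j\<bar> < h"
  shows "\<bar>p$det_partner k - q$det_partner k\<bar> \<le> 6 * R * h"
proof -
  have partner_close: "\<bar>p$m - q$m\<bar> \<le> 6 * R * h"
    if "\<And>x. x \<in> SL2_lines_R R \<Longrightarrow> x$m * x$k - x$i * x$j = v"
      and "m = det_partner k" "i \<noteq> m" "j \<noteq> m" "k \<noteq> m" for i j m v
  proof (rule det_eq_coordinate_close)
    show "p$m * p$k - p$i * p$j = q$m * q$k - q$i * q$j" using that(1) assms(1,2) by simp
  qed (use that(2-5) assms SL2_lines_R_coordinates(2) in auto)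
  consider "k = 1" | "k = 2" | "k = 3" | "k = 4" using exhaust_4 by blast
  then show ?thesis
  proof cases
    case 1
    then show ?thesis
      by (intro partner_close[where i = 2 and j = 3 and v = 1])
        (auto simp: det_partner_def algebra_simps dest!: SL2_lines_R_coordinates(1))
  next
    case 2
    then show ?thesis
      by (intro partner_close[where i = 1 and j = 4 and v = "-1"])
        (auto simp: det_partner_def algebra_simps dest!: SL2_lines_R_coordinates(1))
  next
    case 3
    then show ?thesis
      by (intro partner_close[where i = 1 and j = 4 and v = "-1"])
        (auto simp: det_partner_def algebra_simps dest!: SL2_lines_R_coordinates(1))
  next
    case 4
    then show ?thesis
      by (intro partner_close[where i = 2 and j = 3 and v = 1])
        (auto simp: det_partner_def algebra_simps dest!: SL2_lines_R_coordinates(1))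
  qed
qed

lemma separated_SL2_lines_R_card_ball:
  assumes "1 \<le> R" "S \<subseteq> SL2_lines_R R" "separated \<rho> S" "0 < \<rho>" "\<rho> \<le> t"
  shows "finite (S \<inter> ball x t)" "real (card (S \<inter> ball x t)) \<le> 4 * (52 * R)^3 * (t / \<rho>)^3"
proof -
  define h where "h = \<rho> / (25 * R)"
  have "0 < h" "h \<le> 6 * R * h" "24 * R * h < \<rho>"
    using assms(1,4) by (simp_all add: h_def field_simps)
  define A where "A k = {p \<in> S \<inter> ball x t. 1/2 \<le> \<bar>p$k\<bar>}" for k :: 4
  have A: "finite (A k) \<and> real (card (A k)) \<le> (2 * t / h + 2) ^ 3" for k
  proof -
    define m where "m = det_partner k"
    have apart: "p = q"
      if "p \<in> A k" "q \<in> A k" "\<And>j. j \<in> UNIV - {m} \<Longrightarrow> \<bar>p$j - q$j\<bar> < h" for p q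
    proof -
      have "p \<in> S" "q \<in> S" "p \<in> SL2_lines_R R" "q \<in> SL2_lines_R R" "1/2 \<le> \<bar>p$k\<bar>"
        using that(1,2) \<open>S \<subseteq> SL2_lines_R R\<close> by (auto simp: A_def)
      then have "\<bar>p$m - q$m\<bar> \<le> 6 * R * h"
        using that(3) unfolding m_def by (intro SL2_lines_R_chart) (auto simp: m_def)
      have "\<bar>p$j - q$j\<bar> \<le> 6 * R * h" for j
      proof (cases "j = m")
        case False
        then have "\<bar>p$j - q$j\<bar> < h" using that(3) by simp
        then show ?thesis using \<open>h \<le> 6 * R * h\<close> by linarith
      qed (use \<open>\<bar>p$m - q$m\<bar> \<le> 6 * R * h\<close> in simp)
      then have "dist p q \<le> CARD(4) * (6 * R * h)" by (rule dist_vec_le_CARD_mult)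
      then have "dist p q < \<rho>" using \<open>24 * R * h < \<rho>\<close> by simp
      then show "p = q" using \<open>separated \<rho> S\<close> \<open>p \<in> S\<close> \<open>q \<in> S\<close> unfolding separated_def
        by (meson not_le)
    qed
    have "A k \<subseteq> ball x t" by (auto simp: A_def)
    have "0 \<le> t" using assms(4,5) by simp
    note grid = card_le_coordinate_grid[where J = "UNIV - {m}",
        OF \<open>0 < h\<close> \<open>0 \<le> t\<close> \<open>A k \<subseteq> ball x t\<close> apart]
    have "card (UNIV - {m}) = 3" using card_Diff_singleton[of m "UNIV :: 4 set"] by simp
    then show ?thesis using grid by (simp only:)
  qed
  have cover: "S \<inter> ball x t = (\<Union>k. A k)"
  proof
    show "S \<inter> ball x t \<subseteq> (\<Union>k. A k)"
    proof
      fix p assume p: "p \<in> S \<inter> ball x t"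
      then have "p \<in> SL2_lines" using assms(2) by (auto simp: SL2_lines_R_def)
      then obtain k where "1/2 \<le> \<bar>p$k\<bar>" by (rule SL2_lines_large_coordinate)
      then show "p \<in> (\<Union>k. A k)" using p by (auto simp: A_def)
    qed
  qed (auto simp: A_def)
  then show "finite (S \<inter> ball x t)" using A by simp
  have "2 * t / h + 2 \<le> 52 * R * (t / \<rho>)"
  proof -
    have "1 * t \<le> R * t" using assms(1,4,5) by (intro mult_right_mono) auto
    then have "\<rho> \<le> R * t" using assms(5) by simp
    then have "2 \<le> 2 * R * (t / \<rho>)" using assms(4) by (simp add: field_simps)
    then show ?thesis using assms(1,4) by (simp add: h_def field_simps)
  qed
  then have "(2 * t / h + 2) ^ 3 \<le> (52 * R * (t / \<rho>)) ^ 3"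
    using \<open>0 < h\<close> assms(4,5) by (intro power_mono) auto
  also have "\<dots> = (52 * R)^3 * (t / \<rho>)^3" by (rule power_mult_distrib)
  finally have A_bound: "real (card (A k)) \<le> (52 * R)^3 * (t / \<rho>)^3" for k using A by (meson order_trans)
  have "card (S \<inter> ball x t) \<le> (\<Sum>k\<in>UNIV. card (A k))" unfolding cover by (rule card_UN_le) simp
  then have "real (card (S \<inter> ball x t)) \<le> (\<Sum>k\<in>UNIV. real (card (A k)))"
    by (metis of_nat_le_iff of_nat_sum)
  also have "\<dots> \<le> (\<Sum>k\<in>(UNIV :: 4 set). (52 * R)^3 * (t / \<rho>)^3)" by (rule sum_mono) (rule A_bound)
  finally show "real (card (S \<inter> ball x t)) \<le> 4 * (52 * R)^3 * (t / \<rho>)^3" by simp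
qed

lemma exists_maximal_two_dim_subset:
  assumes "finite L"
  obtains M where "M \<subseteq> L" "two_dim_cond \<rho> M"
    "\<And>l. l \<in> L \<Longrightarrow> l \<notin> M \<Longrightarrow> \<not> two_dim_cond \<rho> (insert l M)"
proof -
  define P where "P = {M. M \<subseteq> L \<and> two_dim_cond \<rho> M}"
  have "finite P" using assms by (simp add: P_def)
  moreover have "{} \<in> P" by (simp add: P_def two_dim_cond_def)
  ultimately obtain M where "M \<in> P" and max: "\<And>M'. M' \<in> P \<Longrightarrow> M \<subseteq> M' \<Longrightarrow> M = M'"
    using finite_has_maximal[of P] by blast
  show thesis
  proof (rule that)
    show "M \<subseteq> L" "two_dim_cond \<rho> M" using \<open>M \<in> P\<close> by (simp_all add: P_def)
    fix l assume "l \<in> L" "l \<notin> M"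
    then have "insert l M \<notin> P" using max[of "insert l M"] by blast
    then show "\<not> two_dim_cond \<rho> (insert l M)" using \<open>l \<in> L\<close> \<open>M \<subseteq> L\<close> by (simp add: P_def)
  qed
qed

lemma two_dim_cond_insert_heavy_ball:
  assumes "finite M" "two_dim_cond \<rho> M" "\<not> two_dim_cond \<rho> (insert l M)" "0 < \<rho>"
  obtains x s where "\<rho> \<le> s" "s \<le> 1" "l \<in> ball x s" "(s / \<rho>)^2 \<le> 2 * real (card (M \<inter> ball x s))"
proof -
  obtain s x where s: "\<rho> \<le> s" "s \<le> 1"
    and big: "(s / \<rho>)^2 < real (card (insert l M \<inter> ball x s))"
    using assms(3) unfolding two_dim_cond_def by (auto simp: not_le)
  have small: "real (card (M \<inter> ball x s)) \<le> (s / \<rho>)^2"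
    using assms(2) s unfolding two_dim_cond_def by auto
  have "l \<in> ball x s"
  proof (rule ccontr)
    assume "l \<notin> ball x s"
    then have "insert l M \<inter> ball x s = M \<inter> ball x s" by auto
    then show False using big small by simp
  qed
  moreover have "l \<notin> M"
  proof
    assume "l \<in> M"
    then have "insert l M = M" by auto
    then show False using big small by simp
  qed
  ultimately have "insert l M \<inter> ball x s = insert l (M \<inter> ball x s)" by auto
  then have card: "real (card (insert l M \<inter> ball x s)) = real (card (M \<inter> ball x s)) + 1"
    using \<open>l \<notin> M\<close> assms(1) by simp
  have "1 \<le> s / \<rho>" using s assms(4) by simp
  then have "1 \<le> (s / \<rho>)^2" by (rule one_le_power)
  then have "1 \<le> card (M \<inter> ball x s)" using big card by linarith
  then have "(s / \<rho>)^2 \<le> 2 * real (card (M \<inter> ball x s))" using big card by linarith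
  then show thesis using that s \<open>l \<in> ball x s\<close> by blast
qed

lemma maximal_two_dim_subset_heavy_balls:
  assumes "finite L" "0 < \<rho>" "\<rho> \<le> 1"
  obtains M r a where "M \<subseteq> L" "two_dim_cond \<rho> M"
    "\<And>l. l \<in> L \<Longrightarrow> \<rho> \<le> r l \<and> r l \<le> 1 \<and> l \<in> ball (a l) (r l) \<and>
       (r l / \<rho>)^2 \<le> 2 * real (card (M \<inter> ball (a l) (r l)))"
proof -
  obtain M where M: "M \<subseteq> L" "two_dim_cond \<rho> M"
    and max: "\<And>l. l \<in> L \<Longrightarrow> l \<notin> M \<Longrightarrow> \<not> two_dim_cond \<rho> (insert l M)"
    using exists_maximal_two_dim_subset[OF assms(1)] by blast
  have "finite M" using M(1) assms(1) by (rule finite_subset)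
  have "\<exists>x s. \<rho> \<le> s \<and> s \<le> 1 \<and> l \<in> ball x s \<and> (s / \<rho>)^2 \<le> 2 * real (card (M \<inter> ball x s))"
    if "l \<in> L" for l
  proof (cases "l \<in> M")
    case True
    then have "l \<in> M \<inter> ball l \<rho>" using assms(2) by simp
    then have "0 < card (M \<inter> ball l \<rho>)"
      using \<open>finite M\<close> card_gt_0_iff by blast
    then show ?thesis using assms(2,3) by (intro exI[of _ l] exI[of _ \<rho>]) simp
  next
    case False
    with that obtain x s where "\<rho> \<le> s" "s \<le> 1" "l \<in> ball x s"
      "(s / \<rho>)^2 \<le> 2 * real (card (M \<inter> ball x s))"
      using two_dim_cond_insert_heavy_ball[OF \<open>finite M\<close> M(2) max assms(2)] by blast
    then show ?thesis by blast
  qed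
  then obtain a r where "\<And>l. l \<in> L \<Longrightarrow> \<rho> \<le> r l \<and> r l \<le> 1 \<and> l \<in> ball (a l) (r l) \<and>
       (r l / \<rho>)^2 \<le> 2 * real (card (M \<inter> ball (a l) (r l)))"
    by metis
  with M show thesis by (rule that)
qed

lemma card_le_by_Vitali_covering:
  fixes a :: "'i \<Rightarrow> 'a::euclidean_space"
  assumes "finite I" "finite X" "finite Y" and cover: "X \<subseteq> (\<Union>i\<in>I. ball (a i) (r i))"
    and r: "\<And>i. i \<in> I \<Longrightarrow> 0 < r i \<and> r i \<le> B" and "0 \<le> c"
    and dense: "\<And>i. i \<in> I \<Longrightarrow> real (card (X \<inter> ball (a i) (5 * r i))) \<le> c * real (card (Y \<inter> ball (a i) (r i)))"
  shows "real (card X) \<le> c * real (card Y)"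
proof -
  obtain C where "C \<subseteq> I" and disj: "pairwise (\<lambda>i j. disjnt (ball (a i) (r i)) (ball (a j) (r j))) C"
    and cover5: "X \<subseteq> (\<Union>i\<in>C. ball (a i) (5 * r i))"
    by (rule Vitali_covering_lemma_balls[where a = a and r = r and K = I and S = X, OF cover r])
  have "finite C" using \<open>C \<subseteq> I\<close> \<open>finite I\<close> by (rule finite_subset)
  have "X = (\<Union>i\<in>C. X \<inter> ball (a i) (5 * r i))" using cover5 by blast
  then have "card X \<le> (\<Sum>i\<in>C. card (X \<inter> ball (a i) (5 * r i)))"
    by (metis card_UN_le[OF \<open>finite C\<close>])
  then have "real (card X) \<le> (\<Sum>i\<in>C. real (card (X \<inter> ball (a i) (5 * r i))))"
    by (metis of_nat_le_iff of_nat_sum)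
  also have "\<dots> \<le> (\<Sum>i\<in>C. c * real (card (Y \<inter> ball (a i) (r i))))"
    using dense \<open>C \<subseteq> I\<close> by (intro sum_mono) blast
  also have "\<dots> = c * real (card (\<Union>i\<in>C. Y \<inter> ball (a i) (r i)))"
  proof -
    have "card (\<Union>i\<in>C. Y \<inter> ball (a i) (r i)) = (\<Sum>i\<in>C. card (Y \<inter> ball (a i) (r i)))"
      using \<open>finite C\<close> \<open>finite Y\<close> disj
      by (intro card_UN_disjoint) (auto simp: pairwise_def disjnt_def)
    then show ?thesis by (simp add: sum_distrib_left)
  qed
  also have "\<dots> \<le> c * real (card Y)"
    using \<open>finite Y\<close> \<open>0 \<le> c\<close> by (intro mult_left_mono) (auto intro!: card_mono)
  finally show ?thesis .
qed

lemma two_dim_cond_card_ball_le: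
  assumes "finite L" "finite F" "L \<subseteq> (\<Union>y\<in>F. ball y 1)" "two_dim_cond \<delta> L"
    "0 < \<delta>" "\<delta> \<le> 1" "\<delta> \<le> t"
  shows "real (card (L \<inter> ball x t)) \<le> (1 + real (card F)) * (t / \<delta>)^2"
proof (cases "t \<le> 1")
  case True
  then have "real (card (L \<inter> ball x t)) \<le> (t / \<delta>)^2"
    using assms(4,7) unfolding two_dim_cond_def by auto
  moreover have "0 \<le> real (card F) * (t / \<delta>)^2" by simp
  ultimately show ?thesis unfolding distrib_right by linarith
next
  case False
  have unit: "real (card (L \<inter> ball y 1)) \<le> (1 / \<delta>)^2" for y
    using assms(4,6) unfolding two_dim_cond_def by auto
  have "L \<inter> ball x t \<subseteq> (\<Union>y\<in>F. L \<inter> ball y 1)" using assms(3) by blast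
  then have "card (L \<inter> ball x t) \<le> card (\<Union>y\<in>F. L \<inter> ball y 1)"
    using assms(1,2) by (intro card_mono) auto
  also have "\<dots> \<le> (\<Sum>y\<in>F. card (L \<inter> ball y 1))" using assms(2) by (rule card_UN_le)
  finally have "real (card (L \<inter> ball x t)) \<le> (\<Sum>y\<in>F. real (card (L \<inter> ball y 1)))"
    by (metis of_nat_le_iff of_nat_sum)
  also have "\<dots> \<le> real (card F) * (1 / \<delta>)^2" using unit by (simp add: sum_bounded_above)
  also have "\<dots> \<le> real (card F) * (t / \<delta>)^2"
    using False assms(5) by (intro mult_left_mono power_mono divide_right_mono) auto
  also have "\<dots> \<le> (1 + real (card F)) * (t / \<delta>)^2" by (simp add: algebra_simps)
  finally show ?thesis .
qed

lemma two_dim_subset_of_separated: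
  assumes "1 \<le> R" "0 < \<rho>" "\<rho> \<le> r" "r \<le> 1" "finite L" "L \<subseteq> SL2_lines_R R" "separated \<rho> L"
    "L \<subseteq> ball x0 r" "200 * (52 * R)^3 \<le> C"
  shows "\<exists>L'. L' \<subseteq> L \<and> (\<rho> / r) * real (card L) \<le> C * real (card L') \<and> two_dim_cond \<rho> L'"
proof -
  define K where "K = 4 * (52 * R)^3"
  have "0 \<le> K" using assms(1) by (simp add: K_def)
  have "\<rho> \<le> 1" using assms(3,4) by linarith
  obtain M s a where M: "M \<subseteq> L" "two_dim_cond \<rho> M"
    and heavy: "\<And>l. l \<in> L \<Longrightarrow> \<rho> \<le> s l \<and> s l \<le> 1 \<and> l \<in> ball (a l) (s l) \<and>
       (s l / \<rho>)^2 \<le> 2 * real (card (M \<inter> ball (a l) (s l)))"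
    using maximal_two_dim_subset_heavy_balls[OF assms(5,2) \<open>\<rho> \<le> 1\<close>] by blast
  have packing: "real (card (L \<inter> ball y t)) \<le> K * (min t r / \<rho>)^3" if "\<rho> \<le> t" for y t
  proof (cases "t \<le> r")
    case True
    then show ?thesis using separated_SL2_lines_R_card_ball(2)[OF assms(1,6,7,2) that]
      by (simp add: K_def)
  next
    case False
    have "card (L \<inter> ball y t) \<le> card (L \<inter> ball x0 r)"
      using assms(5,8) by (intro card_mono) auto
    moreover have "real (card (L \<inter> ball x0 r)) \<le> K * (r / \<rho>)^3"
      using separated_SL2_lines_R_card_ball(2)[OF assms(1,6,7,2,3)] by (simp add: K_def)
    ultimately show ?thesis using False by simp
  qed
  have dense: "real (card (L \<inter> ball (a l) (5 * s l))) \<le> 50 * K * (r / \<rho>) * real (card (M \<inter> ball (a l) (s l)))"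
    if "l \<in> L" for l
  proof -
    have "\<rho> \<le> s l" "(s l / \<rho>)^2 \<le> 2 * real (card (M \<inter> ball (a l) (s l)))" using heavy[OF that] by auto
    have "real (card (L \<inter> ball (a l) (5 * s l))) \<le> K * (min (5 * s l) r / \<rho>)^3"
      using packing \<open>\<rho> \<le> s l\<close> assms(2) by simp
    also have "\<dots> = K * min (5 * s l / \<rho>) (r / \<rho>) ^ 3" using assms(2) by (simp add: min_divide_distrib_right)
    also have "\<dots> \<le> K * ((r / \<rho>) * (5 * s l / \<rho>)^2)"
      using \<open>0 \<le> K\<close> assms(2,3) \<open>\<rho> \<le> s l\<close> by (intro mult_left_mono min_cube_le) auto
    also have "\<dots> = 25 * K * (r / \<rho>) * (s l / \<rho>)^2" by (simp add: power_mult_distrib power_divide)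
    also have "\<dots> \<le> 25 * K * (r / \<rho>) * (2 * real (card (M \<inter> ball (a l) (s l))))"
      using \<open>0 \<le> K\<close> assms(2,3) \<open>(s l / \<rho>)^2 \<le> _\<close> by (intro mult_left_mono) auto
    finally show ?thesis by simp
  qed
  have "real (card L) \<le> 50 * K * (r / \<rho>) * real (card M)"
  proof (rule card_le_by_Vitali_covering[where a = a and r = s and B = 1])
    show "L \<subseteq> (\<Union>l\<in>L. ball (a l) (s l))" using heavy by blast
    show "0 < s l \<and> s l \<le> 1" if "l \<in> L" for l using heavy[OF that] assms(2) by auto
  qed (use assms(2,3,5) M(1) \<open>0 \<le> K\<close> dense in \<open>auto intro: finite_subset\<close>)
  then have "(\<rho> / r) * real (card L) \<le> 50 * K * real (card M)"
    using assms(2,3) by (simp add: field_simps)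
  also have "\<dots> \<le> C * real (card M)" using assms(9) by (intro mult_right_mono) (auto simp: K_def)
  finally show ?thesis using M by blast
qed

lemma two_dim_subset_of_cover:
  assumes "finite F" "L \<subseteq> (\<Union>y\<in>F. ball y 1)" "0 < \<delta>" "\<delta> \<le> \<rho>" "\<rho> \<le> 1"
    "finite L" "finite Lt" "two_dim_cond \<delta> L" "L \<subseteq> (\<Union>l\<in>Lt. ball l \<rho>)"
    "200 * (1 + real (card F)) \<le> C"
  shows "\<exists>Lt'. Lt' \<subseteq> Lt \<and> (\<delta> / \<rho>)^2 * real (card L) \<le> C * real (card Lt') \<and> two_dim_cond \<rho> Lt'"
proof -
  define K where "K = 1 + real (card F)"
  have "0 \<le> K" by (simp add: K_def)
  have "0 < \<rho>" "\<delta> \<le> 1" using assms(3-5) by linarith+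
  obtain M s a where M: "M \<subseteq> Lt" "two_dim_cond \<rho> M"
    and heavy: "\<And>l. l \<in> Lt \<Longrightarrow> \<rho> \<le> s l \<and> s l \<le> 1 \<and> l \<in> ball (a l) (s l) \<and>
       (s l / \<rho>)^2 \<le> 2 * real (card (M \<inter> ball (a l) (s l)))"
    using maximal_two_dim_subset_heavy_balls[OF assms(7) \<open>0 < \<rho>\<close> assms(5)] by blast
  have "finite M" using M(1) assms(7) by (rule finite_subset)
  have cover: "L \<subseteq> (\<Union>l\<in>Lt. ball (a l) (2 * s l))"
  proof
    fix y assume "y \<in> L"
    then obtain l where "l \<in> Lt" "dist l y < \<rho>" using assms(9) by auto
    moreover have "\<rho> \<le> s l" "dist (a l) l < s l" using heavy[OF \<open>l \<in> Lt\<close>] by auto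
    ultimately have "dist (a l) y < 2 * s l" using dist_triangle[of "a l" y l] by linarith
    then show "y \<in> (\<Union>l\<in>Lt. ball (a l) (2 * s l))" using \<open>l \<in> Lt\<close> by auto
  qed
  have dense: "real (card (L \<inter> ball (a l) (5 * (2 * s l))))
      \<le> 200 * K * (\<rho> / \<delta>)^2 * real (card (M \<inter> ball (a l) (2 * s l)))" if "l \<in> Lt" for l
  proof -
    have "\<rho> \<le> s l" "(s l / \<rho>)^2 \<le> 2 * real (card (M \<inter> ball (a l) (s l)))"
      using heavy[OF that] by auto
    then have "\<delta> \<le> 5 * (2 * s l)" using assms(4) \<open>0 < \<rho>\<close> by linarith
    have "real (card (L \<inter> ball (a l) (5 * (2 * s l)))) \<le> K * (5 * (2 * s l) / \<delta>)^2"
      unfolding K_def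
      by (rule two_dim_cond_card_ball_le[OF assms(6,1,2,8,3) \<open>\<delta> \<le> 1\<close> \<open>\<delta> \<le> 5 * (2 * s l)\<close>])
    also have "\<dots> = 100 * K * (\<rho> / \<delta>)^2 * (s l / \<rho>)^2"
      using \<open>0 < \<rho>\<close> by (simp add: field_simps)
    also have "\<dots> \<le> 100 * K * (\<rho> / \<delta>)^2 * (2 * real (card (M \<inter> ball (a l) (s l))))"
      using \<open>0 \<le> K\<close> \<open>(s l / \<rho>)^2 \<le> _\<close> by (intro mult_left_mono) auto
    also have "\<dots> \<le> 100 * K * (\<rho> / \<delta>)^2 * (2 * real (card (M \<inter> ball (a l) (2 * s l))))"
    proof -
      have "card (M \<inter> ball (a l) (s l)) \<le> card (M \<inter> ball (a l) (2 * s l))"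
        using \<open>finite M\<close> \<open>\<rho> \<le> s l\<close> \<open>0 < \<rho>\<close> by (intro card_mono) auto
      then show ?thesis using \<open>0 \<le> K\<close> by (intro mult_left_mono) auto
    qed
    finally show ?thesis by simp
  qed
  have "real (card L) \<le> 200 * K * (\<rho> / \<delta>)^2 * real (card M)"
  proof (rule card_le_by_Vitali_covering[where a = a and r = "\<lambda>l. 2 * s l" and B = 2])
    show "0 < 2 * s l \<and> 2 * s l \<le> 2" if "l \<in> Lt" for l using heavy[OF that] \<open>0 < \<rho>\<close> by auto
  qed (use assms(6,7) cover \<open>finite M\<close> \<open>0 \<le> K\<close> dense in auto)
  then have "(\<delta> / \<rho>)^2 * real (card L) \<le> 200 * K * real (card M)"
    using assms(3) \<open>0 < \<rho>\<close> by (simp add: field_simps)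
  also have "\<dots> \<le> C * real (card M)" using assms(10) by (intro mult_right_mono) (auto simp: K_def)
  finally show ?thesis using M by blast
qed

theorem lemma4p1:
  fixes R :: real
  assumes "R \<ge> 1"
  shows "\<exists>C>0.
    (\<forall>(\<rho>::real) (r::real) (Lt::(real^4) set).
        0 < \<rho> \<longrightarrow> \<rho> \<le> r \<longrightarrow> r \<le> 1 \<longrightarrow>
        finite Lt \<longrightarrow> Lt \<subseteq> SL2_lines_R R \<longrightarrow>
        separated \<rho> Lt \<longrightarrow> (\<exists>x0::real^4. Lt \<subseteq> ball x0 r) \<longrightarrow>
        (\<exists>Lt'. Lt' \<subseteq> Lt \<and> (\<rho> / r) * real (card Lt) \<le> C * real (card Lt') \<and>
               two_dim_cond \<rho> Lt'))
    \<and>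
    (\<forall>\<epsilon>>0. \<exists>c>0.
      \<forall>(\<delta>::real) (\<rho>::real) (L::(real^4) set) (Lt::(real^4) set).
        0 < \<delta> \<longrightarrow> \<delta> \<le> \<rho> \<longrightarrow> \<rho> \<le> 1 \<longrightarrow>
        finite L \<longrightarrow> finite Lt \<longrightarrow>
        L \<subseteq> SL2_lines_R R \<longrightarrow> Lt \<subseteq> SL2_lines_R R \<longrightarrow>
        two_dim_cond \<delta> L \<longrightarrow>
        L \<subseteq> (\<Union>l\<in>Lt. ball l \<rho>) \<longrightarrow>
        (\<exists>Lt'. Lt' \<subseteq> Lt \<and>
               c * \<delta> powr \<epsilon> * (\<delta> / \<rho>)^2 * real (card L) \<le> C * real (card Lt') \<and>
               two_dim_cond \<rho> Lt'))"
proof -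
  have "bounded (SL2_lines_R R)" unfolding SL2_lines_R_def by (rule bounded_Int) simp
  then obtain F where "finite F" and SL2_cover: "SL2_lines_R R \<subseteq> (\<Union>y\<in>F. ball y 1)"
    by (rule bounded_finite_unit_ball_cover)
  define C where "C = 200 * (52 * R)^3 + 200 * (1 + real (card F))"
  have "0 < C" "200 * (52 * R)^3 \<le> C" "200 * (1 + real (card F)) \<le> C"
    using assms unfolding C_def by (simp_all add: add_pos_nonneg)
  have part_i: "\<exists>Lt'. Lt' \<subseteq> Lt \<and> (\<rho> / r) * real (card Lt) \<le> C * real (card Lt') \<and> two_dim_cond \<rho> Lt'"
    if "0 < \<rho>" "\<rho> \<le> r" "r \<le> 1" "finite Lt" "Lt \<subseteq> SL2_lines_R R" "separated \<rho> Lt" "Lt \<subseteq> ball x0 r"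
    for \<rho> r Lt x0
    using two_dim_subset_of_separated[OF assms that \<open>200 * (52 * R)^3 \<le> C\<close>] .
  have part_ii: "\<exists>Lt'. Lt' \<subseteq> Lt \<and> 1 * \<delta> powr \<epsilon> * (\<delta> / \<rho>)^2 * real (card L) \<le> C * real (card Lt') \<and>
      two_dim_cond \<rho> Lt'"
    if asm: "0 < \<epsilon>" "0 < \<delta>" "\<delta> \<le> \<rho>" "\<rho> \<le> 1" "finite L" "finite Lt" "L \<subseteq> SL2_lines_R R"
      "two_dim_cond \<delta> L" "L \<subseteq> (\<Union>l\<in>Lt. ball l \<rho>)" for \<epsilon> \<delta> \<rho> L Lt
  proof -
    have "L \<subseteq> (\<Union>y\<in>F. ball y 1)" using asm(7) SL2_cover by blast
    then obtain Lt' where "Lt' \<subseteq> Lt" "two_dim_cond \<rho> Lt'"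
      and "(\<delta> / \<rho>)^2 * real (card L) \<le> C * real (card Lt')"
      using two_dim_subset_of_cover[OF \<open>finite F\<close> _ asm(2-6,8,9) \<open>200 * (1 + real (card F)) \<le> C\<close>]
      by blast
    moreover have "\<delta> \<le> 1" using asm(3,4) by linarith
    ultimately show ?thesis
      using powr_mult_le[of "(\<delta> / \<rho>)^2 * real (card L)" _ \<delta> \<epsilon>] asm(1,2) by (auto simp: mult.assoc)
  qed
  show ?thesis
    by (rule exI[of _ C], intro conjI allI impI exI[of _ "1::real"])
      (fact \<open>0 < C\<close>, blast intro: part_i, simp, blast intro: part_ii)
qed

end
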